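(* Assume the reward is bounded, $r(y,x_0)\in[-D,D]$, and let $\lambda>0$, $M\ge1$, $1\le I\le T$, $\epsilon>0$. Suppose that the energy estimates $\widehat{\mathcal E}(y,x_s)$ used in Algorithm 1 satisfy $|\mathcal E(y,x_s)-\widehat{\mathcal E}(y,x_s)|\le\epsilon$ for every query $y$ and every intermediate state $x_s$, and that $C-\epsilon-h(\epsilon,M,\lambda,D)>0$, where $$h(\epsilon,M,\lambda,D)=\frac{e^{D/\lambda}-e^{-D/\lambda}}{2}\sqrt{\frac{2}{M}\log\!\left(\frac{2}{\epsilon}\right)}.$$ Let $q(x_0\mid y)$ be the law of the output of Algorithm 1. Then $$\mathsf{TV}\big(q(x_0\mid y)\,\|\,p(x_0\mid y)\big)\le I\left(\frac{2\epsilon+h(\epsilon,M,\lambda,D)}{C-\epsilon-h(\epsilon,M,\lambda,D)}\right)+I\epsilon=\tilde{\mathcal O}\!\left(\frac{I}{\sqrt M}+I\epsilon\right).$$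
   Context: Setting: MLM framework with vocabulary $\mathcal V$, response length $d_x$, nested mask sets, backward generation $x_T\to\cdots\to x_0$ with $x_T$ the fixed fully masked sequence; $p_{\mathrm{ref}}$ is a reference model giving transitions $p_{\mathrm{ref}}(x_s\mid y,x_t)$ and completions $p_{\mathrm{ref}}(x_0\mid y,x_s)$ for a query $y$. Target distribution: $p(x_0\mid y)=p_{\mathrm{ref}}(x_0\mid y)\exp(r(y,x_0)/\lambda)/C$ with $C=\sum_{x_0}p_{\mathrm{ref}}(x_0\mid y)\exp(r(y,x_0)/\lambda)$. Energy: $\mathcal E(y,x_s)=\mathbb E_{p_{\mathrm{ref}}(x_0\mid y,x_s)}[\exp(r(y,x_0)/\lambda)]$. Algorithm 1 (ETS): given $I$ guidance steps with timesteps $t_i=iT/I$ ($t_0=0$, $t_I=T$), start at $x_{t_I}=x_T$; for $i=I,I-1,\dots,1$: draw $M$ candidates $x_{t_{i-1}}(1),\dots,x_{t_{i-1}}(M)$ i.i.d. from $p_{\mathrm{ref}}(x_{t_{i-1}}\mid y,x_{t_i})$; compute weights $w_m=\widehat{\mathcal E}(y,x_{t_{i-1}}(m))/\sum_{m'=1}^M\widehat{\mathcal E}(y,x_{t_{i-1}}(m'))$; select index $m^*$ with probability $w_{m^*}$ and set $x_{t_{i-1}}=x_{t_{i-1}}(m^* )$. The output is $x_0$. Total variation distance: $\mathsf{TV}(p\|q)=\frac12\sum_x|p(x)-q(x)|$. *)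

theory Defs
  imports "HOL-Probability.Probability"
begin

text \<open>
Sequences (states, with masks) form a finite type 'x;
queries have type 'y; time is real in [0,T].
  ptr y t s x  =  p_ref(x_s | y, x_t = x)   (for s < t)
  compl y s x    =  p_ref(x_0 | y, x_s = x)
\<close>

text \<open>Consistency of the reference model: completions are the conditionals of the same
model, i.e. completing from time t equals transitioning to s and completing from there,
and completing a time-0 (clean) state returns it.\<close>
definition consistent_ref ::
  "real \<Rightarrow> ('y \<Rightarrow> real \<Rightarrow> real \<Rightarrow> 'x \<Rightarrow> 'x pmf) \<Rightarrow> ('y \<Rightarrow> real \<Rightarrow> 'x \<Rightarrow> 'x pmf) \<Rightarrow> bool" where
  "consistent_ref T ptr compl \<longleftrightarrow>
     (\<forall>y s t x. 0 \<le> s \<and> s < t \<and> t \<le> T \<longrightarrow> compl y t x = bind_pmf (ptr y t s x) (compl y s)) \<and>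
     (\<forall>y x. compl y 0 x = return_pmf x)"

definition energy ::
  "('y \<Rightarrow> real \<Rightarrow> 'x \<Rightarrow> 'x pmf) \<Rightarrow> ('y \<Rightarrow> 'x \<Rightarrow> real) \<Rightarrow> real \<Rightarrow> 'y \<Rightarrow> real \<Rightarrow> 'x \<Rightarrow> real" where
  "energy compl r lam y s x = measure_pmf.expectation (compl y s x) (\<lambda>x0. exp (r y x0 / lam))"

text \<open>Reference marginal p_ref(x_0|y) = completion from the fully masked x_T.\<close>
definition pref0 :: "('y \<Rightarrow> real \<Rightarrow> 'x \<Rightarrow> 'x pmf) \<Rightarrow> real \<Rightarrow> 'x \<Rightarrow> 'y \<Rightarrow> 'x pmf" where
  "pref0 compl T xT y = compl y T xT"

definition normC ::
  "('y \<Rightarrow> real \<Rightarrow> 'x \<Rightarrow> 'x pmf) \<Rightarrow> real \<Rightarrow> 'x \<Rightarrow> ('y \<Rightarrow> 'x \<Rightarrow> real) \<Rightarrow> real \<Rightarrow> 'y \<Rightarrow> real" where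
  "normC compl T xT r lam y =
     (\<Sum>x0\<in>UNIV. pmf (pref0 compl T xT y) x0 * exp (r y x0 / lam))"

definition target ::
  "('y \<Rightarrow> real \<Rightarrow> 'x::finite \<Rightarrow> 'x pmf) \<Rightarrow> real \<Rightarrow> 'x \<Rightarrow> ('y \<Rightarrow> 'x \<Rightarrow> real) \<Rightarrow> real \<Rightarrow> 'y \<Rightarrow> 'x pmf" where
  "target compl T xT r lam y =
     embed_pmf (\<lambda>x0. pmf (pref0 compl T xT y) x0 * exp (r y x0 / lam) / normC compl T xT r lam y)"

fun iid_list :: "nat \<Rightarrow> 'a pmf \<Rightarrow> 'a list pmf" where
  "iid_list 0 p = return_pmf []"
| "iid_list (Suc n) p = bind_pmf p (\<lambda>a. map_pmf (Cons a) (iid_list n p))"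

definition select_pmf :: "('x \<Rightarrow> real) \<Rightarrow> 'x list \<Rightarrow> 'x pmf" where
  "select_pmf w xs =
     map_pmf (\<lambda>m. xs ! m)
       (embed_pmf (\<lambda>m. if m < length xs then w (xs ! m) / (\<Sum>k<length xs. w (xs ! k)) else 0))"

definition ets_step ::
  "('y \<Rightarrow> real \<Rightarrow> real \<Rightarrow> 'x \<Rightarrow> 'x pmf) \<Rightarrow> ('y \<Rightarrow> real \<Rightarrow> 'x \<Rightarrow> real) \<Rightarrow> nat \<Rightarrow> 'y \<Rightarrow> real \<Rightarrow> real \<Rightarrow> 'x \<Rightarrow> 'x pmf" where
  "ets_step ptr Ehat M y t s x =
     bind_pmf (iid_list M (ptr y t s x)) (select_pmf (Ehat y s))"

definition tstep :: "real \<Rightarrow> nat \<Rightarrow> nat \<Rightarrow> real" where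
  "tstep T I i = real i * T / real I"

text \<open>Law of x_0 when Algorithm 1 is at step i in state x (= x_{t_i}).\<close>
fun ets_from ::
  "real \<Rightarrow> nat \<Rightarrow> ('y \<Rightarrow> real \<Rightarrow> real \<Rightarrow> 'x \<Rightarrow> 'x pmf) \<Rightarrow> ('y \<Rightarrow> real \<Rightarrow> 'x \<Rightarrow> real) \<Rightarrow> nat \<Rightarrow> 'y \<Rightarrow> nat \<Rightarrow> 'x \<Rightarrow> 'x pmf" where
  "ets_from T I ptr Ehat M y 0 x = return_pmf x"
| "ets_from T I ptr Ehat M y (Suc i) x =
     bind_pmf (ets_step ptr Ehat M y (tstep T I (Suc i)) (tstep T I i) x)
              (ets_from T I ptr Ehat M y i)"

definition ets_output ::
  "real \<Rightarrow> nat \<Rightarrow> ('y \<Rightarrow> real \<Rightarrow> real \<Rightarrow> 'x \<Rightarrow> 'x pmf) \<Rightarrow> ('y \<Rightarrow> real \<Rightarrow> 'x \<Rightarrow> real) \<Rightarrow> nat \<Rightarrow> 'x \<Rightarrow> 'y \<Rightarrow> 'x pmf" where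
  "ets_output T I ptr Ehat M xT y = ets_from T I ptr Ehat M y I xT"

definition TV :: "'x::finite pmf \<Rightarrow> 'x pmf \<Rightarrow> real" where
  "TV p q = (1/2) * (\<Sum>x\<in>UNIV. \<bar>pmf p x - pmf q x\<bar>)"

definition hfun :: "real \<Rightarrow> nat \<Rightarrow> real \<Rightarrow> real \<Rightarrow> real" where
  "hfun eps M lam D = (exp (D / lam) - exp (- D / lam)) / 2 * sqrt (2 / real M * ln (2 / eps))"

end

(*
  Write g_s(x) for the reference completion law from state x at time s tilted by exp (r / lambda)
  ("reweight"); at x_T it is the target. Consistency of the reference model makes g_t(x) the
  mixture of the g_s(x'), with x' drawn from the reference transition tilted by the energy E_s.
  A step of the algorithm replaces this tilted transition by picking one of M i.i.d. reference
  candidates with weights Ehat: a candidate's selection probability is its share of the total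
  weight, so the L1 error of the step, multiplied by E_t(x), is at most eps plus the mean
  absolute deviation of the empirical mean of Ehat from E_t(x), which a second-moment bound
  for i.i.d. sums makes at most eps + (e^(D/lambda) - e^(-D/lambda) + eps) / sqrt M.
  The L1 distance of two mixtures is at most that of the mixing laws plus the average distance
  of the components, and multiplying by the energy turns the tilted mixing weights back into
  reference weights; so E_(t_i)(x) times the L1 error after i steps is at most i times that
  bound. At x_T the energy is C; dividing by 2C and comparing with hfun, which is valid when
  eps <= 1 (for larger eps the claimed bound exceeds 1), gives the result.
*)

theory Submission
  imports Defs
begin

lemma expectation_pmf_finite:
  "measure_pmf.expectation (p :: 'a::finite pmf) f = (\<Sum>a\<in>UNIV. pmf p a * f a)"
  by (subst integral_measure_pmf_real[of UNIV]) (auto simp: mult.commute)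

lemma integrable_pmf_finite [simp]:
  "integrable (measure_pmf (p :: 'a::finite pmf)) (f :: _ \<Rightarrow> real)"
  by (simp add: integrable_measure_pmf_finite)

lemma sum_pmf_UNIV [simp]: "(\<Sum>a\<in>UNIV. pmf (p :: 'a::finite pmf) a) = 1"
  by (rule sum_pmf_eq_1) auto

lemma expectation_pos_pmf_finite:
  fixes p :: "'a::finite pmf" and w :: "'a \<Rightarrow> real"
  assumes "\<And>a. 0 < w a"
  shows "0 < measure_pmf.expectation p w"
  using assms by (intro measure_pmf.expectation_greater) auto

lemma expectation_bind_pmf_finite:
  "measure_pmf.expectation (bind_pmf (p :: 'a::finite pmf) K) (f :: 'b::finite \<Rightarrow> real)
   = measure_pmf.expectation p (\<lambda>a. measure_pmf.expectation (K a) f)"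
  by (subst pmf_expectation_bind[of UNIV]) (simp_all add: expectation_pmf_finite[of p])

lemma (in prob_space) expectation_abs_le_sqrt:
  fixes X :: "'a \<Rightarrow> real"
  assumes "integrable M X" "integrable M (\<lambda>x. (X x)\<^sup>2)"
  shows "expectation (\<lambda>x. \<bar>X x\<bar>) \<le> sqrt (expectation (\<lambda>x. (X x)\<^sup>2))"
proof (rule real_le_rsqrt)
  have "0 \<le> variance (\<lambda>x. \<bar>X x\<bar>)"
    by (rule variance_positive)
  also have "\<dots> = expectation (\<lambda>x. (X x)\<^sup>2) - (expectation (\<lambda>x. \<bar>X x\<bar>))\<^sup>2"
    using assms by (subst variance_eq) auto
  finally show "(expectation (\<lambda>x. \<bar>X x\<bar>))\<^sup>2 \<le> expectation (\<lambda>x. (X x)\<^sup>2)"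
    by simp
qed

lemma length_of_mem_iid_list: "xs \<in> set_pmf (iid_list n p) \<Longrightarrow> length xs = n"
  by (induction n arbitrary: xs) auto

lemma finite_set_pmf_iid_list [simp]: "finite (set_pmf (iid_list n (p :: 'a::finite pmf)))"
proof (rule finite_subset)
  show "set_pmf (iid_list n p) \<subseteq> {xs. length xs = n}"
    using length_of_mem_iid_list by blast
qed (rule finite_list_length)

lemma integrable_iid_list [simp]:
  "integrable (measure_pmf (iid_list n (p :: 'a::finite pmf))) (f :: _ \<Rightarrow> real)"
  by (simp add: integrable_measure_pmf_finite)

lemma expectation_iid_list_Suc:
  "measure_pmf.expectation (iid_list (Suc n) (p :: 'a::finite pmf)) (f :: _ \<Rightarrow> real)
   = measure_pmf.expectation p (\<lambda>a. measure_pmf.expectation (iid_list n p) (\<lambda>xs. f (a # xs)))"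
  by (simp add: pmf_expectation_bind[of UNIV] expectation_pmf_finite)

lemma expectation_iid_list_sum_list:
  fixes p :: "'a::finite pmf" and g :: "'a \<Rightarrow> real"
  shows "measure_pmf.expectation (iid_list n p) (\<lambda>xs. \<Sum>a\<leftarrow>xs. g a)
         = real n * measure_pmf.expectation p g"
proof (induction n)
  case (Suc n)
  have "measure_pmf.expectation (iid_list (Suc n) p) (\<lambda>xs. \<Sum>a\<leftarrow>xs. g a)
        = measure_pmf.expectation p (\<lambda>a. g a + real n * measure_pmf.expectation p g)"
    unfolding expectation_iid_list_Suc by (simp add: Suc)
  then show ?case
    by (simp add: algebra_simps)
qed simp

lemma expectation_iid_list_sum_list_squared:
  fixes p :: "'a::finite pmf" and g :: "'a \<Rightarrow> real"
  shows "measure_pmf.expectation (iid_list n p) (\<lambda>xs. (\<Sum>a\<leftarrow>xs. g a)\<^sup>2)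
         = real n * measure_pmf.expectation p (\<lambda>a. (g a)\<^sup>2)
           + real n * (real n - 1) * (measure_pmf.expectation p g)\<^sup>2"
proof (induction n)
  case (Suc n)
  let ?E = "measure_pmf.expectation p"
  have "measure_pmf.expectation (iid_list (Suc n) p) (\<lambda>xs. (\<Sum>a\<leftarrow>xs. g a)\<^sup>2)
        = ?E (\<lambda>a. (g a)\<^sup>2 + 2 * real n * ?E g * g a
                 + (real n * ?E (\<lambda>a. (g a)\<^sup>2) + real n * (real n - 1) * (?E g)\<^sup>2))"
    unfolding expectation_iid_list_Suc by (simp add: Suc expectation_iid_list_sum_list power2_sum algebra_simps)
  then show ?case
    by (simp add: algebra_simps power2_eq_square)
qed simp

lemma expectation_abs_mean_iid_list_le:
  fixes p :: "'a::finite pmf" and g :: "'a \<Rightarrow> real"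
  assumes "0 < n"
  shows "measure_pmf.expectation (iid_list n p) (\<lambda>xs. \<bar>(\<Sum>a\<leftarrow>xs. g a) / n\<bar>)
         \<le> sqrt (measure_pmf.expectation p (\<lambda>a. (g a)\<^sup>2) / n) + \<bar>measure_pmf.expectation p g\<bar>"
proof -
  define A where "A = measure_pmf.expectation p (\<lambda>a. (g a)\<^sup>2)"
  define B where "B = measure_pmf.expectation p g"
  have "0 \<le> A"
    unfolding A_def by simp
  have "measure_pmf.expectation (iid_list n p) (\<lambda>xs. ((\<Sum>a\<leftarrow>xs. g a) / n)\<^sup>2)
        = (real n * A + real n * (real n - 1) * B\<^sup>2) / (real n)\<^sup>2"
    by (simp add: power_divide expectation_iid_list_sum_list_squared A_def B_def)
  also have "\<dots> = A / n + (real n - 1) / n * B\<^sup>2"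
    using assms by (simp add: field_simps power2_eq_square)
  also have "\<dots> \<le> A / n + B\<^sup>2"
    using assms by (intro add_left_mono mult_left_le_one_le) auto
  finally have second_moment: "measure_pmf.expectation (iid_list n p) (\<lambda>xs. ((\<Sum>a\<leftarrow>xs. g a) / n)\<^sup>2)
      \<le> A / n + B\<^sup>2" .
  have "measure_pmf.expectation (iid_list n p) (\<lambda>xs. \<bar>(\<Sum>a\<leftarrow>xs. g a) / n\<bar>)
        \<le> sqrt (measure_pmf.expectation (iid_list n p) (\<lambda>xs. ((\<Sum>a\<leftarrow>xs. g a) / n)\<^sup>2))"
    by (rule measure_pmf.expectation_abs_le_sqrt) simp_all
  also have "\<dots> \<le> sqrt (A / n + B\<^sup>2)"
    using second_moment by simp
  also have "\<dots> \<le> sqrt (A / n) + sqrt (B\<^sup>2)"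
    using \<open>0 \<le> A\<close> by (intro sqrt_add_le_add_sqrt) auto
  finally show ?thesis
    unfolding A_def B_def by simp
qed

lemma count_list_eq_sum_list_indicator: "real (count_list xs x) = (\<Sum>a\<leftarrow>xs. indicator {x} a)"
  by (induction xs) auto

lemma expectation_iid_list_count_list:
  "measure_pmf.expectation (iid_list n (p :: 'a::finite pmf)) (\<lambda>xs. real (count_list xs x))
   = real n * pmf p x"
  unfolding count_list_eq_sum_list_indicator expectation_iid_list_sum_list
  by (simp add: expectation_pmf_finite measure_pmf_single)

lemma sum_list_eq_sum_count_list:
  fixes f :: "'a::finite \<Rightarrow> real"
  shows "(\<Sum>a\<leftarrow>xs. f a) = (\<Sum>x\<in>UNIV. real (count_list xs x) * f x)"
proof (induction xs)
  case (Cons a xs)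
  have "real (count_list (a # xs) x) * f x = (if a = x then f x else 0) + real (count_list xs x) * f x"
    for x by (auto simp: distrib_right)
  then show ?case
    using Cons by (simp add: sum.distrib)
qed simp

lemma pmf_select_pmf:
  fixes w :: "'a \<Rightarrow> real"
  assumes w_pos: "\<And>a. 0 < w a" and "xs \<noteq> []"
  shows "pmf (select_pmf w xs) x = real (count_list xs x) * w x / (\<Sum>a\<leftarrow>xs. w a)"
proof -
  define S where "S = (\<Sum>a\<leftarrow>xs. w a)"
  define \<phi> where "\<phi> m = (if m < length xs then w (xs ! m) / S else 0)" for m
  have S_eq: "(\<Sum>k<length xs. w (xs ! k)) = S"
    unfolding S_def by (simp add: sum_list_sum_nth atLeast0LessThan)
  have "0 < S"
    using \<open>xs \<noteq> []\<close> w_pos unfolding S_eq[symmetric] by (intro sum_pos) auto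
  have \<phi>_nonneg: "0 \<le> \<phi> m" for m
    using w_pos \<open>0 < S\<close> by (simp add: \<phi>_def less_imp_le)
  have "(\<integral>\<^sup>+m. ennreal (\<phi> m) \<partial>count_space UNIV) = (\<Sum>m<length xs. ennreal (\<phi> m))"
    by (rule nn_integral_count_space') (auto simp: \<phi>_def)
  also have "\<dots> = ennreal (\<Sum>m<length xs. \<phi> m)"
    by (rule sum_ennreal) (rule \<phi>_nonneg)
  also have "(\<Sum>m<length xs. \<phi> m) = 1"
    using \<open>0 < S\<close> by (simp add: \<phi>_def sum_divide_distrib[symmetric] S_eq)
  finally have pmf_\<phi>: "pmf (embed_pmf \<phi>) = \<phi>"
    using \<phi>_nonneg by (intro ext pmf_embed_pmf) auto
  have "pmf (select_pmf w xs) x = measure_pmf.prob (embed_pmf \<phi>) {m. m < length xs \<and> xs ! m = x}"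
    unfolding select_pmf_def S_eq \<phi>_def[symmetric] pmf_map
    by (intro measure_eq_AE) (auto simp: AE_measure_pmf_iff set_pmf_iff pmf_\<phi> \<phi>_def split: if_splits)
  also have "\<dots> = (\<Sum>m | m < length xs \<and> xs ! m = x. \<phi> m)"
    by (simp add: measure_measure_pmf_finite pmf_\<phi>)
  also have "\<dots> = real (card {m. m < length xs \<and> xs ! m = x}) * w x / S"
    by (simp add: \<phi>_def)
  also have "card {m. m < length xs \<and> xs ! m = x} = count_list xs x"
    by (simp add: count_list_eq_length_filter length_filter_conv_card eq_commute)
  finally show ?thesis
    unfolding S_def .
qed

(* The law p tilted by w: reweight (compl y s x) (exp (r y _ / lambda)) is the target
   law conditioned on x_s = x. *)
definition reweight :: "'a pmf \<Rightarrow> ('a \<Rightarrow> real) \<Rightarrow> 'a \<Rightarrow> real" where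
  "reweight p w a = pmf p a * w a / measure_pmf.expectation p w"

lemma reweight_return_pmf: "w x \<noteq> 0 \<Longrightarrow> reweight (return_pmf x) w = pmf (return_pmf x)"
  by (simp add: fun_eq_iff reweight_def split: split_indicator)

lemma reweight_bind_pmf:
  fixes p :: "'a::finite pmf" and K :: "'a \<Rightarrow> 'b::finite pmf" and w :: "'b \<Rightarrow> real"
  assumes w_pos: "\<And>b. 0 < w b"
  shows "reweight (bind_pmf p K) w b
         = (\<Sum>a\<in>UNIV. reweight p (\<lambda>a. measure_pmf.expectation (K a) w) a * reweight (K a) w b)"
proof -
  define e where "e a = measure_pmf.expectation (K a) w" for a
  have "0 < e a" for a
    unfolding e_def using w_pos by (rule expectation_pos_pmf_finite)
  then have "(\<Sum>a\<in>UNIV. reweight p e a * reweight (K a) w b)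
             = (\<Sum>a\<in>UNIV. pmf p a * pmf (K a) b) * w b / measure_pmf.expectation p e"
    unfolding reweight_def e_def[symmetric] sum_distrib_right sum_divide_distrib
    by (intro sum.cong) (simp_all add: field_simps less_imp_neq[symmetric])
  also have "\<dots> = reweight (bind_pmf p K) w b"
    unfolding reweight_def e_def expectation_bind_pmf_finite pmf_bind expectation_pmf_finite[of p] ..
  finally show ?thesis
    unfolding e_def by (rule sym)
qed

lemma pmf_embed_pmf_reweight:
  fixes p :: "'a::finite pmf"
  assumes "\<And>a. 0 < w a"
  shows "pmf (embed_pmf (reweight p w)) = reweight p w"
proof -
  have E_pos: "0 < measure_pmf.expectation p w"
    using assms by (rule expectation_pos_pmf_finite)
  have nonneg: "0 \<le> reweight p w a" for a
    using assms[of a] E_pos by (simp add: reweight_def)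
  have "(\<Sum>a\<in>UNIV. reweight p w a) = 1"
    using E_pos by (simp add: reweight_def sum_divide_distrib[symmetric] expectation_pmf_finite)
  then show ?thesis
    using nonneg by (intro ext pmf_embed_pmf) (simp_all add: nn_integral_count_space_finite)
qed

lemma sum_list_abs_normalized_diff_le:
  fixes w e :: "'a \<Rightarrow> real" and Z eps :: real
  assumes "length xs = n" "0 < n" and w_pos: "\<And>a. 0 < w a" and w_err: "\<And>a. \<bar>e a - w a\<bar> \<le> eps"
    and "0 < Z"
  shows "(\<Sum>a\<leftarrow>xs. \<bar>w a / (\<Sum>b\<leftarrow>xs. w b) - e a / (n * Z)\<bar>)
         \<le> (\<bar>(\<Sum>b\<leftarrow>xs. w b) / n - Z\<bar> + eps) / Z"
proof -
  define S where "S = (\<Sum>b\<leftarrow>xs. w b)"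
  define c where "c = 1 / S - 1 / (n * Z)"
  have "0 < S"
    unfolding S_def sum_list_sum_nth using assms(1,2) w_pos by (intro sum_pos) auto
  have term_le: "\<bar>w a / S - e a / (n * Z)\<bar> \<le> w a * \<bar>c\<bar> + eps / (n * Z)" for a
  proof -
    have "w a / S - e a / (n * Z) = w a * c + (w a - e a) / (n * Z)"
      unfolding c_def using \<open>0 < S\<close> \<open>0 < n\<close> \<open>0 < Z\<close> by (simp add: field_simps)
    also have "\<bar>\<dots>\<bar> \<le> \<bar>w a * c\<bar> + \<bar>(w a - e a) / (n * Z)\<bar>"
      by (rule abs_triangle_ineq)
    also have "\<dots> = w a * \<bar>c\<bar> + \<bar>e a - w a\<bar> / (n * Z)"
      using w_pos[of a] \<open>0 < n\<close> \<open>0 < Z\<close> by (simp add: abs_mult abs_divide abs_minus_commute)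
    also have "\<bar>e a - w a\<bar> / (n * Z) \<le> eps / (n * Z)"
      using w_err[of a] \<open>0 < n\<close> \<open>0 < Z\<close> by (simp add: divide_right_mono)
    finally show ?thesis by simp
  qed
  have "(\<Sum>a\<leftarrow>xs. \<bar>w a / S - e a / (n * Z)\<bar>) \<le> (\<Sum>a\<leftarrow>xs. w a * \<bar>c\<bar> + eps / (n * Z))"
    by (rule sum_list_mono) (rule term_le)
  also have "\<dots> = S * \<bar>c\<bar> + eps / Z"
    using \<open>0 < n\<close> assms(1) by (simp add: sum_list_addf sum_list_mult_const sum_list_triv S_def)
  also have "S * \<bar>c\<bar> = \<bar>S / n - Z\<bar> / Z"
  proof -
    have "S * c = (Z - S / n) / Z"
      unfolding c_def using \<open>0 < S\<close> \<open>0 < n\<close> \<open>0 < Z\<close> by (simp add: field_simps)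
    then have "\<bar>S * c\<bar> = \<bar>S / n - Z\<bar> / Z"
      using \<open>0 < Z\<close> by (simp add: abs_divide abs_minus_commute)
    then show ?thesis
      using \<open>0 < S\<close> by (simp add: abs_mult)
  qed
  finally show ?thesis
    unfolding S_def by (simp add: add_divide_distrib)
qed

lemma sum_abs_select_iid_list_minus_reweight_le:
  fixes p :: "'a::finite pmf" and w e :: "'a \<Rightarrow> real" and M :: nat
  assumes w_pos: "\<And>a. 0 < w a" and w_err: "\<And>a. \<bar>e a - w a\<bar> \<le> eps"
    and Z_pos: "0 < measure_pmf.expectation p e" and "0 < M"
  shows "(\<Sum>x\<in>UNIV. \<bar>pmf (bind_pmf (iid_list M p) (select_pmf w)) x - reweight p e x\<bar>)
         \<le> (measure_pmf.expectation (iid_list M p)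
               (\<lambda>xs. \<bar>(\<Sum>a\<leftarrow>xs. w a) / M - measure_pmf.expectation p e\<bar>) + eps)
            / measure_pmf.expectation p e"
proof -
  define q where "q = iid_list M p"
  define Z where "Z = measure_pmf.expectation p e"
  define \<delta> where "\<delta> xs a = w a / (\<Sum>b\<leftarrow>xs. w b) - e a / (M * Z)" for xs a
  have support: "xs \<noteq> [] \<and> length xs = M" if "xs \<in> set_pmf q" for xs
    using length_of_mem_iid_list[OF that[unfolded q_def]] \<open>0 < M\<close> by auto
  have diff_eq: "pmf (bind_pmf q (select_pmf w)) x - reweight p e x
                 = measure_pmf.expectation q (\<lambda>xs. count_list xs x * \<delta> xs x)" for x
  proof -
    have "pmf (bind_pmf q (select_pmf w)) x
          = measure_pmf.expectation q (\<lambda>xs. count_list xs x * w x / (\<Sum>b\<leftarrow>xs. w b))"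
      unfolding pmf_bind
      by (intro integral_cong_AE) (auto simp: AE_measure_pmf_iff pmf_select_pmf w_pos support)
    moreover have "reweight p e x = measure_pmf.expectation q (\<lambda>xs. count_list xs x * e x / (M * Z))"
      using \<open>0 < M\<close>
      by (simp add: q_def reweight_def Z_def expectation_iid_list_count_list[unfolded q_def])
    ultimately show ?thesis
      by (simp add: q_def \<delta>_def right_diff_distrib)
  qed
  have "(\<Sum>x\<in>UNIV. \<bar>pmf (bind_pmf q (select_pmf w)) x - reweight p e x\<bar>)
        \<le> (\<Sum>x\<in>UNIV. measure_pmf.expectation q (\<lambda>xs. count_list xs x * \<bar>\<delta> xs x\<bar>))"
    unfolding diff_eq by (intro sum_mono order_trans[OF integral_abs_bound]) (simp add: abs_mult)
  also have "\<dots> = measure_pmf.expectation q (\<lambda>xs. \<Sum>a\<leftarrow>xs. \<bar>\<delta> xs a\<bar>)"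
    unfolding sum_list_eq_sum_count_list q_def
    by (simp add: integral_sum)
  also have "\<dots> \<le> measure_pmf.expectation q (\<lambda>xs. (\<bar>(\<Sum>a\<leftarrow>xs. w a) / M - Z\<bar> + eps) / Z)"
    using support \<open>0 < M\<close> unfolding \<delta>_def q_def
    by (intro integral_mono_AE)
      (auto simp: AE_measure_pmf_iff intro!: sum_list_abs_normalized_diff_le w_pos w_err Z_pos[folded Z_def])
  finally show ?thesis
    unfolding q_def Z_def by (simp add: add_divide_distrib)
qed

lemma expectation_abs_mean_iid_list_minus_expectation_le:
  fixes p :: "'a::finite pmf" and w e :: "'a \<Rightarrow> real" and M :: nat
  assumes w_err: "\<And>a. \<bar>e a - w a\<bar> \<le> eps" and e_bounds: "\<And>a. lo \<le> e a \<and> e a \<le> hi" and "0 < M"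
  shows "measure_pmf.expectation (iid_list M p)
           (\<lambda>xs. \<bar>(\<Sum>a\<leftarrow>xs. w a) / M - measure_pmf.expectation p e\<bar>)
         \<le> (hi - lo + eps) / sqrt M + eps"
proof -
  define Z where "Z = measure_pmf.expectation p e"
  have "lo \<le> Z" "Z \<le> hi"
    unfolding Z_def using e_bounds
    by (auto intro!: measure_pmf.integral_ge_const measure_pmf.integral_le_const)
  have "0 \<le> eps"
    using w_err by (meson abs_ge_zero order_trans)
  have "\<bar>w a - Z\<bar> \<le> hi - lo + eps" for a
    using w_err[of a] e_bounds[of a] \<open>lo \<le> Z\<close> \<open>Z \<le> hi\<close> by (auto simp: abs_le_iff)
  then have "(w a - Z)\<^sup>2 \<le> (hi - lo + eps)\<^sup>2" for a
    by (metis abs_le_square_iff abs_of_nonneg abs_ge_zero order_trans)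
  then have second_moment: "measure_pmf.expectation p (\<lambda>a. (w a - Z)\<^sup>2) \<le> (hi - lo + eps)\<^sup>2"
    by (intro measure_pmf.integral_le_const) auto
  have "measure_pmf.expectation p (\<lambda>a. w a - Z) = measure_pmf.expectation p (\<lambda>a. w a - e a)"
    by (simp add: Z_def)
  also have "\<bar>\<dots>\<bar> \<le> measure_pmf.expectation p (\<lambda>a. \<bar>w a - e a\<bar>)"
    by (rule integral_abs_bound)
  also have "\<dots> \<le> eps"
    using w_err by (intro measure_pmf.integral_le_const) (auto simp: abs_minus_commute)
  finally have bias: "\<bar>measure_pmf.expectation p (\<lambda>a. w a - Z)\<bar> \<le> eps" .
  have "measure_pmf.expectation (iid_list M p) (\<lambda>xs. \<bar>(\<Sum>a\<leftarrow>xs. w a) / M - Z\<bar>)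
        = measure_pmf.expectation (iid_list M p) (\<lambda>xs. \<bar>(\<Sum>a\<leftarrow>xs. w a - Z) / M\<bar>)"
    using \<open>0 < M\<close>
    by (intro integral_cong_AE)
      (auto simp: AE_measure_pmf_iff sum_list_subtractf sum_list_triv length_of_mem_iid_list diff_divide_distrib)
  also have "\<dots> \<le> sqrt (measure_pmf.expectation p (\<lambda>a. (w a - Z)\<^sup>2) / M) + eps"
    using expectation_abs_mean_iid_list_le[OF \<open>0 < M\<close>, of p "\<lambda>a. w a - Z"] bias by linarith
  also have "sqrt (measure_pmf.expectation p (\<lambda>a. (w a - Z)\<^sup>2) / M) \<le> (hi - lo + eps) / sqrt M"
    using second_moment \<open>lo \<le> Z\<close> \<open>Z \<le> hi\<close> \<open>0 \<le> eps\<close>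
    by (simp add: real_sqrt_divide divide_right_mono real_le_lsqrt)
  finally show ?thesis
    unfolding Z_def by simp
qed

lemma expectation_mul_sum_abs_select_iid_list_minus_reweight_le:
  fixes p :: "'a::finite pmf" and w e :: "'a \<Rightarrow> real" and M :: nat
  assumes w_pos: "\<And>a. 0 < w a" and w_err: "\<And>a. \<bar>e a - w a\<bar> \<le> eps"
    and e_bounds: "\<And>a. lo \<le> e a \<and> e a \<le> hi" and "0 < lo" and "0 < M"
  shows "measure_pmf.expectation p e
           * (\<Sum>x\<in>UNIV. \<bar>pmf (bind_pmf (iid_list M p) (select_pmf w)) x - reweight p e x\<bar>)
         \<le> 2 * eps + (hi - lo + eps) / sqrt M"
proof -
  define Z where "Z = measure_pmf.expectation p e"
  have "0 < Z"
    unfolding Z_def using e_bounds \<open>0 < lo\<close>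
    by (intro expectation_pos_pmf_finite) (meson less_le_trans)
  have "(\<Sum>x\<in>UNIV. \<bar>pmf (bind_pmf (iid_list M p) (select_pmf w)) x - reweight p e x\<bar>)
        \<le> (measure_pmf.expectation (iid_list M p) (\<lambda>xs. \<bar>(\<Sum>a\<leftarrow>xs. w a) / M - Z\<bar>) + eps) / Z"
    unfolding Z_def
    by (rule sum_abs_select_iid_list_minus_reweight_le[OF w_pos w_err]) (use \<open>0 < Z\<close> \<open>0 < M\<close> Z_def in auto)
  moreover have "measure_pmf.expectation (iid_list M p) (\<lambda>xs. \<bar>(\<Sum>a\<leftarrow>xs. w a) / M - Z\<bar>)
                 \<le> (hi - lo + eps) / sqrt M + eps"
    unfolding Z_def by (rule expectation_abs_mean_iid_list_minus_expectation_le) (use assms in auto)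
  ultimately show ?thesis
    using \<open>0 < Z\<close>
    unfolding Z_def[symmetric] by (simp add: field_simps)
qed

lemma sum_abs_mixture_diff_le:
  fixes Q K :: "'a::finite \<Rightarrow> real" and F G :: "'a \<Rightarrow> 'b::finite \<Rightarrow> real"
  assumes F_nonneg: "\<And>a b. 0 \<le> F a b" and F_sum: "\<And>a. (\<Sum>b\<in>UNIV. F a b) = 1"
    and K_nonneg: "\<And>a. 0 \<le> K a"
  shows "(\<Sum>b\<in>UNIV. \<bar>(\<Sum>a\<in>UNIV. Q a * F a b) - (\<Sum>a\<in>UNIV. K a * G a b)\<bar>)
         \<le> (\<Sum>a\<in>UNIV. \<bar>Q a - K a\<bar>) + (\<Sum>a\<in>UNIV. K a * (\<Sum>b\<in>UNIV. \<bar>F a b - G a b\<bar>))"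
proof -
  have "\<bar>Q a * F a b - K a * G a b\<bar> \<le> \<bar>Q a - K a\<bar> * F a b + K a * \<bar>F a b - G a b\<bar>" for a b
  proof -
    have "Q a * F a b - K a * G a b = (Q a - K a) * F a b + K a * (F a b - G a b)"
      by (simp add: algebra_simps)
    then show ?thesis
      using F_nonneg[of a b] K_nonneg[of a] by (metis abs_mult abs_of_nonneg abs_triangle_ineq)
  qed
  then have "(\<Sum>b\<in>UNIV. \<bar>(\<Sum>a\<in>UNIV. Q a * F a b) - (\<Sum>a\<in>UNIV. K a * G a b)\<bar>)
             \<le> (\<Sum>b\<in>UNIV. \<Sum>a\<in>UNIV. \<bar>Q a - K a\<bar> * F a b + K a * \<bar>F a b - G a b\<bar>)"
    unfolding sum_subtractf[symmetric] by (intro sum_mono order_trans[OF sum_abs]) auto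
  also have "\<dots> = (\<Sum>a\<in>UNIV. \<bar>Q a - K a\<bar> * (\<Sum>b\<in>UNIV. F a b))
                  + (\<Sum>a\<in>UNIV. K a * (\<Sum>b\<in>UNIV. \<bar>F a b - G a b\<bar>))"
    by (subst sum.swap) (simp add: sum.distrib sum_distrib_left)
  finally show ?thesis
    using F_sum by simp
qed

lemma mul_sum_abs_bind_minus_reweight_bind_le:
  fixes p Q :: "'a::finite pmf" and K F :: "'a \<Rightarrow> 'b::finite pmf" and \<phi> :: "'b \<Rightarrow> real"
  assumes \<phi>_pos: "\<And>b. 0 < \<phi> b"
  defines "e \<equiv> \<lambda>a. measure_pmf.expectation (K a) \<phi>"
  shows "measure_pmf.expectation p e * (\<Sum>b\<in>UNIV. \<bar>pmf (bind_pmf Q F) b - reweight (bind_pmf p K) \<phi> b\<bar>)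
         \<le> measure_pmf.expectation p e * (\<Sum>a\<in>UNIV. \<bar>pmf Q a - reweight p e a\<bar>)
           + (\<Sum>a\<in>UNIV. pmf p a * (e a * (\<Sum>b\<in>UNIV. \<bar>pmf (F a) b - reweight (K a) \<phi> b\<bar>)))"
proof -
  have e_pos: "0 < e a" for a
    unfolding e_def using \<phi>_pos by (rule expectation_pos_pmf_finite)
  then have E_pos: "0 < measure_pmf.expectation p e"
    by (rule expectation_pos_pmf_finite)
  have "(\<Sum>b\<in>UNIV. \<bar>pmf (bind_pmf Q F) b - reweight (bind_pmf p K) \<phi> b\<bar>)
        \<le> (\<Sum>a\<in>UNIV. \<bar>pmf Q a - reweight p e a\<bar>)
          + (\<Sum>a\<in>UNIV. reweight p e a * (\<Sum>b\<in>UNIV. \<bar>pmf (F a) b - reweight (K a) \<phi> b\<bar>))"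
    (is "?err \<le> ?step_err + (\<Sum>a\<in>UNIV. reweight p e a * ?err_F a)")
    unfolding reweight_bind_pmf[OF \<phi>_pos] e_def[symmetric] pmf_bind expectation_pmf_finite[of Q]
    by (rule sum_abs_mixture_diff_le) (auto simp: reweight_def e_pos E_pos less_imp_le)
  then have "measure_pmf.expectation p e * ?err
             \<le> measure_pmf.expectation p e * ?step_err
               + measure_pmf.expectation p e * (\<Sum>a\<in>UNIV. reweight p e a * ?err_F a)"
    using E_pos by (simp add: mult_left_mono flip: distrib_left)
  also have "measure_pmf.expectation p e * (\<Sum>a\<in>UNIV. reweight p e a * ?err_F a)
             = (\<Sum>a\<in>UNIV. pmf p a * (e a * ?err_F a))"
    using E_pos by (simp add: sum_distrib_left reweight_def mult.assoc)
  finally show ?thesis .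
qed

lemma tstep_bounds:
  assumes "0 < T" "i < I"
  shows "0 \<le> tstep T I i" "tstep T I i < tstep T I (Suc i)" "tstep T I (Suc i) \<le> T"
proof -
  have "real (Suc i) * T \<le> real I * T"
    using assms by (intro mult_right_mono) auto
  then show "0 \<le> tstep T I i" "tstep T I i < tstep T I (Suc i)" "tstep T I (Suc i) \<le> T"
    using assms by (simp_all add: tstep_def divide_strict_right_mono field_simps)
qed

lemma energy_bounds:
  fixes compl :: "'y \<Rightarrow> real \<Rightarrow> 'x \<Rightarrow> 'x::finite pmf"
  assumes r_bounds: "\<And>x0. r y x0 \<in> {-D..D}" and "0 < lam"
  shows "exp (- D / lam) \<le> energy compl r lam y s x \<and> energy compl r lam y s x \<le> exp (D / lam)"
proof -
  have "exp (- D / lam) \<le> exp (r y x0 / lam) \<and> exp (r y x0 / lam) \<le> exp (D / lam)" for x0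
    using r_bounds[of x0] \<open>0 < lam\<close> divide_right_mono[of "-D" "r y x0" lam]
    by (auto simp: divide_right_mono)
  then show ?thesis
    unfolding energy_def
    by (auto intro!: measure_pmf.integral_ge_const measure_pmf.integral_le_const)
qed

lemma energy_eq_expectation_energy:
  fixes compl :: "'y \<Rightarrow> real \<Rightarrow> 'x \<Rightarrow> 'x::finite pmf"
  assumes "compl y t x = bind_pmf p (compl y s)"
  shows "energy compl r lam y t x = measure_pmf.expectation p (energy compl r lam y s)"
  unfolding energy_def assms expectation_bind_pmf_finite ..

lemma energy_mul_sum_abs_ets_step_minus_reweight_le:
  fixes compl :: "'y \<Rightarrow> real \<Rightarrow> 'x \<Rightarrow> 'x::finite pmf"
  assumes "compl y t x = bind_pmf (ptr y t s x) (compl y s)"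
    and "\<And>a. 0 < Ehat y s a" "\<And>a. \<bar>energy compl r lam y s a - Ehat y s a\<bar> \<le> eps"
    and "\<And>a. lo \<le> energy compl r lam y s a \<and> energy compl r lam y s a \<le> hi" "0 < lo" "0 < M"
  shows "energy compl r lam y t x
           * (\<Sum>a\<in>UNIV. \<bar>pmf (ets_step ptr Ehat M y t s x) a - reweight (ptr y t s x) (energy compl r lam y s) a\<bar>)
         \<le> 2 * eps + (hi - lo + eps) / sqrt M"
  unfolding energy_eq_expectation_energy[where compl = compl, OF assms(1)] ets_step_def
  by (rule expectation_mul_sum_abs_select_iid_list_minus_reweight_le) (use assms in auto)

lemma energy_mul_sum_abs_ets_from_minus_reweight_le:
  fixes T lam eps lo hi :: real and ptr :: "'y \<Rightarrow> real \<Rightarrow> real \<Rightarrow> 'x::finite \<Rightarrow> 'x pmf"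
    and compl :: "'y \<Rightarrow> real \<Rightarrow> 'x \<Rightarrow> 'x pmf" and r :: "'y \<Rightarrow> 'x \<Rightarrow> real"
    and Ehat :: "'y \<Rightarrow> real \<Rightarrow> 'x \<Rightarrow> real"
  assumes cons: "consistent_ref T ptr compl" and "0 < T"
    and est: "\<And>s x. 0 \<le> s \<Longrightarrow> s \<le> T \<Longrightarrow> \<bar>energy compl r lam y s x - Ehat y s x\<bar> \<le> eps"
    and est_pos: "\<And>s x. 0 \<le> s \<Longrightarrow> s \<le> T \<Longrightarrow> 0 < Ehat y s x"
    and E_bounds: "\<And>s x. lo \<le> energy compl r lam y s x \<and> energy compl r lam y s x \<le> hi"
    and "0 < lo" "0 < M" "i \<le> I"
  shows "energy compl r lam y (tstep T I i) x
           * (\<Sum>x0\<in>UNIV. \<bar>pmf (ets_from T I ptr Ehat M y i x) x0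
                          - reweight (compl y (tstep T I i) x) (\<lambda>x0. exp (r y x0 / lam)) x0\<bar>)
         \<le> real i * (2 * eps + (hi - lo + eps) / sqrt M)"
  using \<open>i \<le> I\<close>
proof (induction i arbitrary: x)
  case 0
  have "compl y 0 x = return_pmf x"
    using cons by (simp add: consistent_ref_def)
  then show ?case
    by (simp add: tstep_def reweight_return_pmf)
next
  case (Suc i)
  define B where "B = 2 * eps + (hi - lo + eps) / sqrt M"
  define s where "s = tstep T I i"
  define t where "t = tstep T I (Suc i)"
  define \<phi> where "\<phi> = (\<lambda>x0. exp (r y x0 / lam))"
  define p where "p = ptr y t s x"
  define err where "err j a = (\<Sum>x0\<in>UNIV. \<bar>pmf (ets_from T I ptr Ehat M y j a) x0
                                              - reweight (compl y (tstep T I j) a) \<phi> x0\<bar>)" for j a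
  have "0 \<le> s" "s < t" "t \<le> T"
    using tstep_bounds[OF \<open>0 < T\<close>] Suc.prems unfolding s_def t_def by auto
  then have compl_t: "compl y t x = bind_pmf p (compl y s)"
    using cons unfolding consistent_ref_def p_def by blast
  have energy_s: "energy compl r lam y s = (\<lambda>a. measure_pmf.expectation (compl y s a) \<phi>)"
    by (simp add: fun_eq_iff energy_def \<phi>_def)
  have "energy compl r lam y t x * err (Suc i) x
        \<le> energy compl r lam y t x
            * (\<Sum>a\<in>UNIV. \<bar>pmf (ets_step ptr Ehat M y t s x) a - reweight p (energy compl r lam y s) a\<bar>)
          + (\<Sum>a\<in>UNIV. pmf p a * (energy compl r lam y s a * err i a))"
    unfolding energy_eq_expectation_energy[where compl = compl, OF compl_t] err_def ets_from.simps(2) s_def[symmetric]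
      t_def[symmetric] compl_t energy_s
    by (rule mul_sum_abs_bind_minus_reweight_bind_le) (simp add: \<phi>_def)
  also have "\<dots> \<le> B + (\<Sum>a\<in>UNIV. pmf p a * (real i * B))"
  proof (rule add_mono)
    show "energy compl r lam y t x
            * (\<Sum>a\<in>UNIV. \<bar>pmf (ets_step ptr Ehat M y t s x) a - reweight p (energy compl r lam y s) a\<bar>) \<le> B"
      unfolding B_def p_def using compl_t[unfolded p_def] est_pos est E_bounds \<open>0 \<le> s\<close> \<open>s < t\<close> \<open>t \<le> T\<close>
      by (intro energy_mul_sum_abs_ets_step_minus_reweight_le \<open>0 < lo\<close> \<open>0 < M\<close>) auto
    show "(\<Sum>a\<in>UNIV. pmf p a * (energy compl r lam y s a * err i a)) \<le> (\<Sum>a\<in>UNIV. pmf p a * (real i * B))"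
      using Suc.IH Suc.prems by (intro sum_mono mult_left_mono) (simp_all add: err_def s_def \<phi>_def B_def)
  qed
  also have "\<dots> = real (Suc i) * B"
    by (simp add: algebra_simps flip: sum_distrib_left)
  finally show ?case
    unfolding err_def t_def \<phi>_def B_def .
qed

lemma normC_eq_energy:
  "normC compl T xT r lam y = energy compl r lam y T (xT :: 'x::finite)"
  by (simp add: normC_def pref0_def energy_def expectation_pmf_finite)

lemma normC_pos: "0 < normC compl T (xT :: 'x::finite) r lam y"
  unfolding normC_eq_energy energy_def by (simp add: expectation_pos_pmf_finite)

lemma pmf_target:
  "pmf (target compl T xT r lam y) = reweight (compl y T (xT :: 'x::finite)) (\<lambda>x0. exp (r y x0 / lam))"
proof -
  have "target compl T xT r lam y = embed_pmf (reweight (compl y T xT) (\<lambda>x0. exp (r y x0 / lam)))"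
    unfolding target_def reweight_def normC_eq_energy energy_def pref0_def ..
  then show ?thesis
    by (simp add: pmf_embed_pmf_reweight)
qed

lemma TV_ets_output_target_le:
  fixes T lam eps lo hi :: real and ptr :: "'y \<Rightarrow> real \<Rightarrow> real \<Rightarrow> 'x::finite \<Rightarrow> 'x pmf"
    and compl :: "'y \<Rightarrow> real \<Rightarrow> 'x \<Rightarrow> 'x pmf" and r :: "'y \<Rightarrow> 'x \<Rightarrow> real"
    and Ehat :: "'y \<Rightarrow> real \<Rightarrow> 'x \<Rightarrow> real"
  assumes cons: "consistent_ref T ptr compl" and "0 < T" "0 < I"
    and est: "\<And>s x. 0 \<le> s \<Longrightarrow> s \<le> T \<Longrightarrow> \<bar>energy compl r lam y s x - Ehat y s x\<bar> \<le> eps"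
    and est_pos: "\<And>s x. 0 \<le> s \<Longrightarrow> s \<le> T \<Longrightarrow> 0 < Ehat y s x"
    and E_bounds: "\<And>s x. lo \<le> energy compl r lam y s x \<and> energy compl r lam y s x \<le> hi"
    and "0 < lo" "0 < M"
  shows "TV (ets_output T I ptr Ehat M xT y) (target compl T xT r lam y)
         \<le> real I * ((2 * eps + (hi - lo + eps) / sqrt M) / (2 * normC compl T xT r lam y))"
proof -
  have "tstep T I I = T"
    using \<open>0 < I\<close> by (simp add: tstep_def)
  have "normC compl T xT r lam y * (2 * TV (ets_output T I ptr Ehat M xT y) (target compl T xT r lam y))
        = energy compl r lam y (tstep T I I) xT
          * (\<Sum>x0\<in>UNIV. \<bar>pmf (ets_from T I ptr Ehat M y I xT) x0
                - reweight (compl y (tstep T I I) xT) (\<lambda>x0. exp (r y x0 / lam)) x0\<bar>)"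
    by (simp add: TV_def ets_output_def pmf_target normC_eq_energy \<open>tstep T I I = T\<close>)
  also have "\<dots> \<le> real I * (2 * eps + (hi - lo + eps) / sqrt M)"
    using assms by (intro energy_mul_sum_abs_ets_from_minus_reweight_le) auto
  finally show ?thesis
    using normC_pos[of compl T xT r lam y] by (simp add: field_simps)
qed

lemma TV_le_1: "TV p q \<le> 1"
proof -
  have "(\<Sum>x\<in>UNIV. \<bar>pmf p x - pmf q x\<bar>) \<le> (\<Sum>x\<in>UNIV. pmf p x + pmf q x)"
    by (intro sum_mono) (simp add: abs_le_iff)
  then show ?thesis
    by (simp add: TV_def sum.distrib)
qed

lemma hfun_nonneg:
  assumes "0 < eps" "eps \<le> 2" "0 \<le> D" "0 < lam"
  shows "0 \<le> hfun eps M lam D"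
  using assms by (simp add: hfun_def divide_right_mono)

lemma hfun_ge:
  assumes "0 < eps" "eps \<le> 1" "0 \<le> D" "0 < lam"
  shows "(exp (D / lam) - exp (- D / lam)) / (2 * sqrt M) \<le> hfun eps M lam D"
proof -
  define c where "c = exp (D / lam) - exp (- D / lam)"
  have "0 \<le> c"
    using assms(3,4) by (simp add: c_def divide_right_mono)
  have "1 / 2 \<le> ln (2 :: real)"
    using ln2_ge_two_thirds by simp
  also have "ln 2 \<le> ln (2 / eps)"
    using assms(1,2) by (simp add: field_simps)
  finally have "1 \<le> sqrt (2 * ln (2 / eps))"
    by simp
  then have "c / (2 * sqrt M) \<le> c * sqrt (2 * ln (2 / eps)) / (2 * sqrt M)"
    using \<open>0 \<le> c\<close> by (intro divide_right_mono) (auto intro: mult_le_cancel_left1[THEN iffD2])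
  also have "\<dots> = hfun eps M lam D"
    by (simp add: hfun_def c_def real_sqrt_mult real_sqrt_divide)
  finally show ?thesis
    unfolding c_def .
qed

lemma step_error_le_hfun_ratio:
  fixes h M :: real
  assumes "(hi - lo) / (2 * sqrt M) \<le> h" "lo \<le> hi" "1 \<le> M" "0 \<le> eps" "0 < C" "eps + h < C"
  shows "(2 * eps + (hi - lo + eps) / sqrt M) / (2 * C) \<le> (2 * eps + h) / (C - eps - h)"
proof -
  have "1 \<le> sqrt M"
    using \<open>1 \<le> M\<close> by simp
  then have "eps / sqrt M \<le> eps"
    using \<open>0 \<le> eps\<close> by (simp add: divide_le_eq mult_le_cancel_left1)
  have "(2 * eps + (hi - lo + eps) / sqrt M) / 2 = eps + (hi - lo) / (2 * sqrt M) + eps / sqrt M / 2"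
    using \<open>1 \<le> sqrt M\<close> by (simp add: field_simps)
  also have "\<dots> \<le> eps + h + eps / 2"
    using assms(1) \<open>eps / sqrt M \<le> eps\<close> by (intro add_mono) auto
  also have "\<dots> \<le> 2 * eps + h"
    using \<open>0 \<le> eps\<close> by simp
  finally have half_le: "(2 * eps + (hi - lo + eps) / sqrt M) / 2 \<le> 2 * eps + h" .
  have "0 \<le> h"
    using assms(1,2,3) by (smt (verit) divide_nonneg_pos real_sqrt_ge_one)
  have "(2 * eps + (hi - lo + eps) / sqrt M) / (2 * C) \<le> (2 * eps + h) / C"
    using half_le \<open>0 < C\<close> by (simp add: divide_right_mono flip: divide_divide_eq_left)
  also have "\<dots> \<le> (2 * eps + h) / (C - eps - h)"
    using \<open>0 \<le> h\<close> \<open>0 \<le> eps\<close> \<open>eps + h < C\<close> by (intro divide_left_mono) auto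
  finally show ?thesis .
qed

lemma one_le_error_bound_if_one_le_eps:
  assumes "1 \<le> eps" "1 \<le> I" "0 < C" "eps + hfun eps M lam D < C" "0 \<le> D" "0 < lam"
  shows "1 \<le> real I * ((2 * eps + hfun eps M lam D) / (C - eps - hfun eps M lam D)) + real I * eps"
proof -
  define h where "h = hfun eps M lam D"
  have "1 \<le> (2 * eps + h) / (C - eps - h) + eps"
  proof (cases "eps \<le> 2")
    case True
    then have "0 \<le> h"
      unfolding h_def using assms by (intro hfun_nonneg) auto
    then have "0 \<le> (2 * eps + h) / (C - eps - h)"
      using assms(1,4) unfolding h_def[symmetric] by simp
    then show ?thesis
      using assms(1) by linarith
  next
    case False
    \<comment> \<open>Here the logarithm in hfun is negative, and so is its sqrt in Isabelle, so h may be negative.\<close>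
    have "-1 \<le> (2 * eps + h) / (C - eps - h)"
      using assms(1,3,4) unfolding h_def[symmetric] by (simp add: field_simps)
    then show ?thesis
      using False by linarith
  qed
  then have "1 * 1 \<le> real I * ((2 * eps + h) / (C - eps - h) + eps)"
    using \<open>1 \<le> I\<close> by (intro mult_mono) auto
  then show ?thesis
    unfolding h_def by (simp add: distrib_left)
qed

lemma TV_ets_output_target_le_hfun_ratio:
  fixes T lam eps D :: real and ptr :: "'y \<Rightarrow> real \<Rightarrow> real \<Rightarrow> 'x::finite \<Rightarrow> 'x pmf"
    and compl :: "'y \<Rightarrow> real \<Rightarrow> 'x \<Rightarrow> 'x pmf" and r :: "'y \<Rightarrow> 'x \<Rightarrow> real"
    and Ehat :: "'y \<Rightarrow> real \<Rightarrow> 'x \<Rightarrow> real"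
  assumes cons: "consistent_ref T ptr compl" and "0 < T" "0 < I" "1 \<le> M"
    and r_bounds: "\<And>x0. r y x0 \<in> {-D..D}" and "0 < lam" and "0 < eps" "eps \<le> 1"
    and est: "\<And>s x. 0 \<le> s \<Longrightarrow> s \<le> T \<Longrightarrow> \<bar>energy compl r lam y s x - Ehat y s x\<bar> \<le> eps"
    and est_pos: "\<And>s x. 0 \<le> s \<Longrightarrow> s \<le> T \<Longrightarrow> 0 < Ehat y s x"
    and "eps + hfun eps M lam D < normC compl T xT r lam y"
  shows "TV (ets_output T I ptr Ehat M xT y) (target compl T xT r lam y)
         \<le> real I * ((2 * eps + hfun eps M lam D) / (normC compl T xT r lam y - eps - hfun eps M lam D))"
proof -
  have "0 \<le> D"
    using r_bounds[of xT] by auto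
  have "exp (- D / lam) \<le> energy compl r lam y s x \<and> energy compl r lam y s x \<le> exp (D / lam)" for s x
    using r_bounds \<open>0 < lam\<close> by (rule energy_bounds)
  then have "TV (ets_output T I ptr Ehat M xT y) (target compl T xT r lam y)
             \<le> real I * ((2 * eps + (exp (D / lam) - exp (- D / lam) + eps) / sqrt M)
                          / (2 * normC compl T xT r lam y))"
    using assms by (intro TV_ets_output_target_le) auto
  also have "\<dots> \<le> real I * ((2 * eps + hfun eps M lam D) / (normC compl T xT r lam y - eps - hfun eps M lam D))"
    using assms \<open>0 \<le> D\<close> normC_pos
    by (intro mult_left_mono step_error_le_hfun_ratio hfun_ge) (auto simp: divide_right_mono)
  finally show ?thesis .
qed

theorem proposition3:
  fixes T :: nat and I M :: nat and lam D eps :: real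
    and ptr :: "'y \<Rightarrow> real \<Rightarrow> real \<Rightarrow> 'x::finite \<Rightarrow> 'x pmf"
    and compl :: "'y \<Rightarrow> real \<Rightarrow> 'x \<Rightarrow> 'x pmf"
    and r :: "'y \<Rightarrow> 'x \<Rightarrow> real"
    and Ehat :: "'y \<Rightarrow> real \<Rightarrow> 'x \<Rightarrow> real"
    and xT :: 'x and y :: 'y
  assumes cons: "consistent_ref (real T) ptr compl"
    and rbound: "\<forall>y' x0. r y' x0 \<in> {-D..D}"
    and lam: "lam > 0" and M: "M \<ge> 1" and I: "1 \<le> I" "I \<le> T" and eps: "eps > 0"
    and est: "\<forall>y' s x. 0 \<le> s \<and> s \<le> real T \<longrightarrow> \<bar>energy compl r lam y' s x - Ehat y' s x\<bar> \<le> eps"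
    and est_pos: "\<forall>y' s x. 0 \<le> s \<and> s \<le> real T \<longrightarrow> Ehat y' s x > 0"
    and Cpos: "normC compl (real T) xT r lam y - eps - hfun eps M lam D > 0"
  shows "TV (ets_output (real T) I ptr Ehat M xT y) (target compl (real T) xT r lam y)
           \<le> real I * ((2 * eps + hfun eps M lam D)
                        / (normC compl (real T) xT r lam y - eps - hfun eps M lam D))
             + real I * eps"
proof (cases "eps \<le> 1")
  case True
  have "TV (ets_output (real T) I ptr Ehat M xT y) (target compl (real T) xT r lam y)
        \<le> real I * ((2 * eps + hfun eps M lam D) / (normC compl (real T) xT r lam y - eps - hfun eps M lam D))"
    using True cons rbound lam M I eps est est_pos Cpos by (intro TV_ets_output_target_le_hfun_ratio) auto
  then show ?thesis
    using eps by (simp add: add_increasing2)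
next
  case False
  have "0 \<le> D"
    using rbound by force
  have "1 \<le> real I * ((2 * eps + hfun eps M lam D) / (normC compl (real T) xT r lam y - eps - hfun eps M lam D))
             + real I * eps"
    using False Cpos I(1) normC_pos \<open>0 \<le> D\<close> lam by (intro one_le_error_bound_if_one_le_eps) auto
  then show ?thesis
    by (rule order_trans[OF TV_le_1])
qed

end
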